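(* Let $M$ be an infinitesimally flexible Kokotsakis mesh with central $n$-gon whose faces are planar, satisfying for every $i$: $v_i,w_i$ not collinear and $a_{i-1},a_i$ not in the plane spanned by $v_i,w_i$. Let $\pi$ be the plane of the central face, and let $l_i$ be the line of intersection of $\pi$ with the plane through $A_i,V_i,W_i$. Assume $l_i$ and $l_{i+1}$ are not parallel for all $i$, let $B_i=l_i\cap l_{i+1}$, assume $B_{i-1}\neq B_i$ and $A_i\notin\{B_{i-1},B_i\}$, and define real numbers $t_i$ by $A_i=t_iB_{i-1}+(1-t_i)B_i$. Then $$\prod_{i=1}^n\frac{1-t_i}{t_i}=(-1)^n .$$
   Context: A Kokotsakis mesh with central $n$-gon consists of a central face with vertices $A_1,\dots,A_n$ (indices in $\mathbb Z/n\mathbb Z$) and further points $V_i,W_i$ such that at each vertex $A_i$ exactly four faces meet, containing the angles $A_{i+1}A_iA_{i-1}$ (central face), $A_{i-1}A_iV_i$, $V_iA_iW_i$, $W_iA_iA_{i+1}$; the face containing $W_iA_iA_{i+1}$ also contains $A_iA_{i+1}V_{i+1}$. Put $a_i=A_{i+1}-A_i$, $v_i=V_i-A_i$, $w_i=W_i-A_i$. Infinitesimally flexible means: there is a nonzero infinitesimal isometric deformation with the central face fixed (velocities of vertices, not all zero, such that each face undergoes an infinitesimal rigid motion and the central face's vertices have zero velocity). Note $A_i\in l_i$ and $B_{i-1},B_i\in l_i$, so $t_i$ is well defined. *)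

theory Defs
  imports "HOL-Analysis.Analysis"
begin

(* Indices are taken in {0..<n}, read cyclically modulo n. *)
definition nxt :: "nat \<Rightarrow> nat \<Rightarrow> nat" where
  "nxt n i = (i + 1) mod n"

definition prv :: "nat \<Rightarrow> nat \<Rightarrow> nat" where
  "prv n i = (i + n - 1) mod n"

definition inf_rigid :: "(real^3) list \<Rightarrow> (real^3) list \<Rightarrow> bool" where
  "inf_rigid ps us \<longleftrightarrow> length ps = length us \<and>
     (\<exists>\<omega> \<tau>. \<forall>k < length ps. cross3 \<omega> (ps ! k) + \<tau> = us ! k)"

(* Kokotsakis mesh with central n-gon A_0..A_{n-1}, extra vertices V_i, W_i.
   Faces: central face {A_i}; corner face (V_i, A_i, W_i);
   side face (A_i, A_{i+1}, V_{i+1}, W_i). *)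

definition inf_flexible ::
  "nat \<Rightarrow> (nat \<Rightarrow> real^3) \<Rightarrow> (nat \<Rightarrow> real^3) \<Rightarrow> (nat \<Rightarrow> real^3) \<Rightarrow> bool" where
  "inf_flexible n A V W \<longleftrightarrow>
     (\<exists>uA uV uW :: nat \<Rightarrow> real^3.
        (\<forall>i<n. uA i = 0) \<and>
        (\<exists>i<n. uA i \<noteq> 0 \<or> uV i \<noteq> 0 \<or> uW i \<noteq> 0) \<and>
        inf_rigid (map A [0..<n]) (map uA [0..<n]) \<and>
        (\<forall>i<n. inf_rigid [V i, A i, W i] [uV i, uA i, uW i]) \<and>
        (\<forall>i<n. inf_rigid [A i, A (nxt n i), V (nxt n i), W i]
                          [uA i, uA (nxt n i), uV (nxt n i), uW i]))"

definition lines_parallel :: "(real^3) set \<Rightarrow> (real^3) set \<Rightarrow> bool" where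
  "lines_parallel L M \<longleftrightarrow>
     (\<exists>d p q. d \<noteq> 0 \<and> L = {p + s *\<^sub>R d | s. True} \<and> M = {q + s *\<^sub>R d | s. True})"

definition lline :: "nat \<Rightarrow> (nat \<Rightarrow> real^3) \<Rightarrow> (nat \<Rightarrow> real^3) \<Rightarrow> (nat \<Rightarrow> real^3) \<Rightarrow> nat \<Rightarrow> (real^3) set" where
  "lline n A V W i = affine hull (A ` {..<n}) \<inter> affine hull {A i, V i, W i}"

end

theory Submission
  imports Defs
begin

(* Let N be a normal of the central plane pi, m_i = v_i x w_i a normal of the
   corner face at A_i, and e_i = B_i - B_(i-1) the direction of the line l_i = pi /\ (corner
   plane i).  Since both endpoints A_i, A_(i+1) of a side face are fixed, the side face i
   rotates with angular velocity r_i a_i about its edge a_i.  The corner face at A_i shares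
   V_i with side face i-1 and W_i with side face i, which forces
   (r_(i-1) a_(i-1) - r_i a_i) . m_i = 0; as this vector also lies in pi it is parallel to
   e_i.  Writing a_(i-1) and a_i in terms of the directions e_(i-1), e_i, e_(i+1) via the
   parameters t and taking the N-component of a cross product with e_i gives the cyclic
   recurrence  t_(i-1) X_(i-1) + (1 - t_(i+1)) X_i = 0  for X_i = r_i * N.(e_i x e_(i+1)).
   Nontriviality of the deformation makes some X_j nonzero, hence all X_i are nonzero and
   multiplying the recurrence around the cycle yields prod (1 - t_i)/t_i = (-1)^n. *)

lemma cross3_zero_parallel:
  fixes a x :: "real^3"
  assumes "a \<noteq> 0" "cross3 a x = 0"
  shows "x = ((a \<bullet> x) / (a \<bullet> a)) *\<^sub>R a"
proof -
  have eq: "(a \<bullet> a) *\<^sub>R x = (a \<bullet> x) *\<^sub>R a"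
    using Lagrange[of a a x] assms(2) by simp
  have "a \<bullet> a \<noteq> 0" using assms(1) by simp
  then have "x = (1 / (a \<bullet> a)) *\<^sub>R ((a \<bullet> a) *\<^sub>R x)" by simp
  also have "\<dots> = ((a \<bullet> x) / (a \<bullet> a)) *\<^sub>R a" unfolding eq by simp
  finally show ?thesis .
qed

lemma orth_cross3_in_span:
  fixes v w x :: "real^3"
  assumes "cross3 v w \<noteq> 0" "x \<bullet> cross3 v w = 0"
  shows "x \<in> span {v, w}"
proof -
  let ?m = "cross3 v w"
  have decomp: "(?m \<bullet> ?m) *\<^sub>R x = (cross3 x w \<bullet> ?m) *\<^sub>R v + (cross3 v x \<bullet> ?m) *\<^sub>R w
      + (x \<bullet> ?m) *\<^sub>R ?m"
    by (simp add: cross3_simps forall_3)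
  have "?m \<bullet> ?m \<noteq> 0" using assms(1) by simp
  then have "x = (1 / (?m \<bullet> ?m)) *\<^sub>R ((?m \<bullet> ?m) *\<^sub>R x)" by simp
  also have "\<dots> = (1 / (?m \<bullet> ?m)) *\<^sub>R ((cross3 x w \<bullet> ?m) *\<^sub>R v + (cross3 v x \<bullet> ?m) *\<^sub>R w)"
    using decomp assms(2) by simp
  also have "\<dots> \<in> span {v, w}"
    by (intro span_mul span_add) (auto intro: span_base)
  finally show ?thesis .
qed

lemma cross3_zero_of_common_normals:
  fixes N m x y :: "real^3"
  assumes "cross3 N m \<noteq> 0"
    and "x \<bullet> N = 0" "x \<bullet> m = 0" "y \<bullet> N = 0" "y \<bullet> m = 0"
  shows "cross3 x y = 0"
proof -
  let ?f = "cross3 N m"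
  have along_f: "z = ((?f \<bullet> z) / (?f \<bullet> ?f)) *\<^sub>R ?f" if "z \<bullet> N = 0" "z \<bullet> m = 0" for z
  proof (rule cross3_zero_parallel[OF assms(1)])
    have "cross3 z ?f = 0"
      using Lagrange[of z N m] that by simp
    then show "cross3 ?f z = 0" by (metis cross_skew neg_equal_0_iff_equal)
  qed
  have "cross3 x y = cross3 (((?f \<bullet> x) / (?f \<bullet> ?f)) *\<^sub>R ?f) (((?f \<bullet> y) / (?f \<bullet> ?f)) *\<^sub>R ?f)"
    using along_f[OF assms(2,3)] along_f[OF assms(4,5)] by metis
  then show ?thesis by (simp add: cross_mult_left cross_mult_right)
qed

lemma cross3_zero_of_orth_normal:
  fixes N x y :: "real^3"
  assumes "N \<noteq> 0" "x \<bullet> N = 0" "y \<bullet> N = 0" "N \<bullet> cross3 x y = 0"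
  shows "cross3 x y = 0"
proof -
  have "cross3 N (cross3 x y) = 0"
    using Lagrange[of N x y] assms(2,3) by (simp add: inner_commute)
  then show ?thesis
    using cross3_zero_parallel[OF assms(1)] assms(4) by (metis divide_eq_0_iff scaleR_zero_left)
qed

lemma affine_in_two_planes:
  fixes L :: "(real^3) set" and N m P Q :: "real^3"
  assumes "affine L" "cross3 N m \<noteq> 0"
    and orth: "\<And>x y. x \<in> L \<Longrightarrow> y \<in> L \<Longrightarrow> (x - y) \<bullet> N = 0 \<and> (x - y) \<bullet> m = 0"
    and "P \<in> L" "Q \<in> L" "P \<noteq> Q"
  shows "L = {Q + s *\<^sub>R (Q - P) | s. True}"
proof (intro set_eqI iffI)
  fix x assume "x \<in> L"
  let ?d = "Q - P"
  have "cross3 ?d (x - Q) = 0"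
    using cross3_zero_of_common_normals[OF assms(2)] orth[OF \<open>Q \<in> L\<close> \<open>P \<in> L\<close>]
      orth[OF \<open>x \<in> L\<close> \<open>Q \<in> L\<close>] by blast
  then have "x - Q = ((?d \<bullet> (x - Q)) / (?d \<bullet> ?d)) *\<^sub>R ?d"
    using cross3_zero_parallel assms(6) by simp
  then have "x = Q + ((?d \<bullet> (x - Q)) / (?d \<bullet> ?d)) *\<^sub>R ?d" by (metis add.commute diff_add_cancel)
  then show "x \<in> {Q + s *\<^sub>R (Q - P) | s. True}" by blast
next
  fix x assume "x \<in> {Q + s *\<^sub>R (Q - P) | s. True}"
  then obtain s where "x = Q + s *\<^sub>R (Q - P)" by blast
  then have "x = (1 - (1 + s)) *\<^sub>R P + (1 + s) *\<^sub>R Q" by (simp add: algebra_simps)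
  then show "x \<in> L" using assms(1,4,5) unfolding affine_alt by blast
qed

lemma lines_parallel_of_cross3_zero:
  fixes p q d d' :: "real^3"
  assumes "d \<noteq> 0" "d' \<noteq> 0" "cross3 d d' = 0"
  shows "lines_parallel {p + s *\<^sub>R d | s. True} {q + s *\<^sub>R d' | s. True}"
proof -
  define k where "k = (d \<bullet> d') / (d \<bullet> d)"
  have d': "d' = k *\<^sub>R d" using cross3_zero_parallel[OF assms(1,3)] unfolding k_def .
  then have "k \<noteq> 0" using assms(2) by auto
  have "{q + s *\<^sub>R d' | s. True} = {q + s *\<^sub>R d | s. True}"
  proof (intro set_eqI iffI)
    fix x assume "x \<in> {q + s *\<^sub>R d' | s. True}"
    then obtain s where "x = q + (s * k) *\<^sub>R d" using d' by auto
    then show "x \<in> {q + s *\<^sub>R d | s. True}" by blast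
  next
    fix x assume "x \<in> {q + s *\<^sub>R d | s. True}"
    then obtain s where "x = q + s *\<^sub>R d" by blast
    then have "x = q + (s / k) *\<^sub>R d'" using d' \<open>k \<noteq> 0\<close> by simp
    then show "x \<in> {q + s *\<^sub>R d' | s. True}" by blast
  qed
  then show ?thesis unfolding lines_parallel_def using assms(1) by blast
qed

lemma inf_rigid_fixed_point:
  assumes "inf_rigid ps us" "j < length ps" "us ! j = 0"
  shows "\<exists>\<omega>. \<forall>k < length ps. us ! k = cross3 \<omega> (ps ! k - ps ! j)"
proof -
  obtain \<omega> \<tau> where motion: "\<forall>k < length ps. cross3 \<omega> (ps ! k) + \<tau> = us ! k"
    using assms(1) unfolding inf_rigid_def by blast
  then have "\<tau> = - cross3 \<omega> (ps ! j)"
    using assms(2,3) by (metis add.commute eq_neg_iff_add_eq_0)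
  then show ?thesis
    using motion by (intro exI[of _ \<omega>]) (auto simp: Cross3.right_diff_distrib)
qed

lemma corner_face_motion:
  assumes "inf_rigid [x, p, y] [ux, 0, uy]"
  shows "\<exists>\<sigma>. ux = cross3 \<sigma> (x - p) \<and> uy = cross3 \<sigma> (y - p)"
proof -
  have "\<exists>\<sigma>. \<forall>k < length [x, p, y]. [ux, 0, uy] ! k = cross3 \<sigma> ([x, p, y] ! k - [x, p, y] ! 1)"
    by (rule inf_rigid_fixed_point[OF assms]) simp_all
  then obtain \<sigma> where motion: "\<forall>k < length [x, p, y]. [ux, 0, uy] ! k = cross3 \<sigma> ([x, p, y] ! k - p)"
    by auto
  show ?thesis
    using motion[rule_format, of 0] motion[rule_format, of 2] by auto
qed

lemma side_face_motion:
  assumes "inf_rigid [p, q, x, y] [0, 0, ux, uy]" "p \<noteq> q"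
  shows "\<exists>k. ux = cross3 (k *\<^sub>R (q - p)) (x - q) \<and> uy = cross3 (k *\<^sub>R (q - p)) (y - p)"
proof -
  have "\<exists>\<omega>. \<forall>k < length [p, q, x, y]. [0, 0, ux, uy] ! k = cross3 \<omega> ([p, q, x, y] ! k - [p, q, x, y] ! 0)"
    by (rule inf_rigid_fixed_point[OF assms(1)]) simp_all
  then obtain \<omega> where motion: "\<forall>k < length [p, q, x, y]. [0, 0, ux, uy] ! k = cross3 \<omega> ([p, q, x, y] ! k - p)"
    by auto
  have fixed: "cross3 \<omega> (q - p) = 0" and ux: "ux = cross3 \<omega> (x - p)"
    and uy: "uy = cross3 \<omega> (y - p)"
    using motion[rule_format, of 1] motion[rule_format, of 2] motion[rule_format, of 3]
    by (simp_all add: numeral_eq_Suc)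
  define c where "c = ((q - p) \<bullet> \<omega>) / ((q - p) \<bullet> (q - p))"
  have "cross3 (q - p) \<omega> = 0" using fixed by (metis cross_skew neg_equal_0_iff_equal)
  then have \<omega>: "\<omega> = c *\<^sub>R (q - p)"
    using cross3_zero_parallel assms(2) unfolding c_def by simp
  have "cross3 \<omega> (x - p) = cross3 \<omega> (x - q) + cross3 \<omega> (q - p)"
    unfolding cross_add_right[symmetric] by simp
  then show ?thesis using ux uy fixed \<omega> by (intro exI[of _ c]) simp
qed

lemma corner_compatibility:
  fixes \<omega> \<omega>' \<sigma> v w :: "real^3"
  assumes "cross3 \<omega> v = cross3 \<sigma> v" "cross3 \<omega>' w = cross3 \<sigma> w"
  shows "(\<omega> - \<omega>') \<bullet> cross3 v w = 0"
proof -
  have "cross3 (\<omega> - \<sigma>) v = 0" "cross3 (\<omega>' - \<sigma>) w = 0"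
    using assms by (simp_all add: Cross3.left_diff_distrib)
  then have "(\<omega> - \<sigma>) \<bullet> cross3 v w = 0" "(\<omega>' - \<sigma>) \<bullet> cross3 w v = 0"
    using cross_triple[of "\<omega> - \<sigma>" v w] cross_triple[of "\<omega>' - \<sigma>" w v]
    by (simp_all add: inner_commute)
  then have "(\<omega> - \<sigma>) \<bullet> cross3 v w = 0" "(\<omega>' - \<sigma>) \<bullet> cross3 v w = 0"
    by (metis cross_skew inner_minus_right neg_equal_0_iff_equal)+
  then show ?thesis by (simp add: inner_diff_left)
qed

lemma cyclic_index:
  assumes "0 < n" "i < n"
  shows "nxt n i < n" "prv n i < n" "prv n (nxt n i) = i" "nxt n (prv n i) = i"
  using assms by (auto simp: nxt_def prv_def mod_if split: if_splits)

lemma bij_nxt: "0 < n \<Longrightarrow> bij_betw (nxt n) {..<n} {..<n}"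
  by (rule bij_betw_byWitness[where f'="prv n"]) (auto simp: cyclic_index)

lemma bij_prv: "0 < n \<Longrightarrow> bij_betw (prv n) {..<n} {..<n}"
  by (rule bij_betw_byWitness[where f'="nxt n"]) (auto simp: cyclic_index)

(* In the recurrence a zero propagates forward around the cycle, so one nonzero value
   forces all values to be nonzero. *)
lemma cyclic_recurrence_nonvanishing:
  fixes t X :: "nat \<Rightarrow> real"
  assumes "0 < n" and t1: "\<And>i. i < n \<Longrightarrow> t i \<noteq> 1"
    and rec: "\<And>i. i < n \<Longrightarrow> t (prv n i) * X (prv n i) + (1 - t (nxt n i)) * X i = 0"
    and "j < n" "X j \<noteq> 0" "i < n"
  shows "X i \<noteq> 0"
proof
  assume "X i = 0"
  have zero_step: "X (nxt n k) = 0" if "k < n" "X k = 0" for k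
  proof -
    have "(1 - t (nxt n (nxt n k))) * X (nxt n k) = 0"
      using rec[of "nxt n k"] that cyclic_index[OF \<open>0 < n\<close>] by simp
    then show ?thesis using t1 cyclic_index[OF \<open>0 < n\<close>] that by auto
  qed
  have "X ((i + m) mod n) = 0" for m
  proof (induction m)
    case 0
    then show ?case using \<open>X i = 0\<close> \<open>i < n\<close> by simp
  next
    case (Suc m)
    have "(i + m) mod n < n" using \<open>0 < n\<close> by simp
    from zero_step[OF this Suc.IH] show ?case by (simp add: nxt_def mod_Suc_eq)
  qed
  from this[of "j + n - i"] have "X j = 0" using \<open>i < n\<close> \<open>j < n\<close> by simp
  with \<open>X j \<noteq> 0\<close> show False by simp
qed

(* Multiplying the recurrence over all indices gives the product formula. *)
lemma cyclic_recurrence_product: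
  fixes t X :: "nat \<Rightarrow> real"
  assumes "0 < n" and t: "\<And>i. i < n \<Longrightarrow> t i \<noteq> 0 \<and> t i \<noteq> 1"
    and rec: "\<And>i. i < n \<Longrightarrow> t (prv n i) * X (prv n i) + (1 - t (nxt n i)) * X i = 0"
    and "j < n" "X j \<noteq> 0"
  shows "(\<Prod>i<n. (1 - t i) / t i) = (-1) ^ n"
proof -
  have X: "X i \<noteq> 0" if "i < n" for i
    using cyclic_recurrence_nonvanishing[OF \<open>0 < n\<close> _ rec \<open>j < n\<close> \<open>X j \<noteq> 0\<close> that] t by blast
  have quotient: "(1 - t (nxt n i)) / t (prv n i) = (-1) * (X (prv n i) / X i)" if "i < n" for i
  proof -
    have "(1 - t (nxt n i)) * X i = - (t (prv n i) * X (prv n i))" using rec[OF that] by simp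
    then show ?thesis using X[OF that] t cyclic_index[OF \<open>0 < n\<close> that] by (simp add: field_simps)
  qed
  have "(\<Prod>i<n. (1 - t i) / t i) = (\<Prod>i<n. 1 - t i) / (\<Prod>i<n. t i)"
    by (rule prod_dividef)
  also have "(\<Prod>i<n. 1 - t i) = (\<Prod>i<n. 1 - t (nxt n i))"
    using prod.reindex_bij_betw[OF bij_nxt[OF \<open>0 < n\<close>], of "\<lambda>i. 1 - t i"] by simp
  also have "(\<Prod>i<n. t i) = (\<Prod>i<n. t (prv n i))"
    using prod.reindex_bij_betw[OF bij_prv[OF \<open>0 < n\<close>], of t] by simp
  also have "(\<Prod>i<n. 1 - t (nxt n i)) / (\<Prod>i<n. t (prv n i))
      = (\<Prod>i<n. (1 - t (nxt n i)) / t (prv n i))"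
    by (rule prod_dividef[symmetric])
  also have "\<dots> = (\<Prod>i<n. (-1) * (X (prv n i) / X i))"
    using quotient by (intro prod.cong) auto
  also have "\<dots> = (-1) ^ n * ((\<Prod>i<n. X (prv n i)) / (\<Prod>i<n. X i))"
    by (subst prod.distrib) (simp add: prod_dividef)
  also have "(\<Prod>i<n. X (prv n i)) = (\<Prod>i<n. X i)"
    using prod.reindex_bij_betw[OF bij_prv[OF \<open>0 < n\<close>], of X] by simp
  also have "(\<Prod>i<n. X i) / (\<Prod>i<n. X i) = 1"
    using X by (simp add: prod_zero_iff)
  finally show ?thesis by simp
qed

locale kokotsakis_mesh =
  fixes n :: nat and A V W B :: "nat \<Rightarrow> real^3" and t :: "nat \<Rightarrow> real"
  assumes n_ge_3: "3 \<le> n"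
    and A_inj: "inj_on A {..<n}"
    and central_plane: "aff_dim (A ` {..<n}) = 2"
    and corner_nondegenerate: "\<And>i. i < n \<Longrightarrow> \<not> collinear {0, V i - A i, W i - A i}"
    and edge_transversal: "\<And>i. i < n \<Longrightarrow> A (nxt n i) - A i \<notin> span {V i - A i, W i - A i}"
    and lines_nonparallel:
      "\<And>i. i < n \<Longrightarrow> \<not> lines_parallel (lline n A V W i) (lline n A V W (nxt n i))"
    and B_meet: "\<And>i. i < n \<Longrightarrow> B i \<in> lline n A V W i \<inter> lline n A V W (nxt n i)"
    and B_distinct: "\<And>i. i < n \<Longrightarrow> B (prv n i) \<noteq> B i"
    and A_not_B: "\<And>i. i < n \<Longrightarrow> A i \<noteq> B (prv n i) \<and> A i \<noteq> B i"
    and A_between: "\<And>i. i < n \<Longrightarrow> A i = t i *\<^sub>R B (prv n i) + (1 - t i) *\<^sub>R B i"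
begin

lemma index: "i < n \<Longrightarrow> nxt n i < n" "i < n \<Longrightarrow> prv n i < n"
  "i < n \<Longrightarrow> prv n (nxt n i) = i" "i < n \<Longrightarrow> nxt n (prv n i) = i"
  using cyclic_index[of n i] n_ge_3 by simp_all

definition normal :: "real^3" where
  "normal = (SOME N. N \<noteq> 0 \<and>
     (\<forall>x \<in> affine hull (A ` {..<n}). \<forall>y \<in> affine hull (A ` {..<n}). (x - y) \<bullet> N = 0))"

definition edge :: "nat \<Rightarrow> real^3" where
  "edge i = A (nxt n i) - A i"

definition corner_normal :: "nat \<Rightarrow> real^3" where
  "corner_normal i = cross3 (V i - A i) (W i - A i)"

definition dir :: "nat \<Rightarrow> real^3" where
  "dir i = B i - B (prv n i)"

definition turn :: "nat \<Rightarrow> real" where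
  "turn i = normal \<bullet> cross3 (dir i) (dir (nxt n i))"

lemma normal:
  "normal \<noteq> 0"
  "\<And>x y. x \<in> affine hull (A ` {..<n}) \<Longrightarrow> y \<in> affine hull (A ` {..<n}) \<Longrightarrow> (x - y) \<bullet> normal = 0"
proof -
  have "aff_dim (A ` {..<n}) < int DIM(real^3)" using central_plane by simp
  then obtain N b where "N \<noteq> 0" and "A ` {..<n} \<subseteq> {x. N \<bullet> x = b}"
    using aff_lowdim_subset_hyperplane by blast
  then have hull_N: "affine hull (A ` {..<n}) \<subseteq> {x. N \<bullet> x = b}"
    by (intro hull_minimal affine_hyperplane)
  then have "(x - y) \<bullet> N = 0"
    if "x \<in> affine hull (A ` {..<n})" "y \<in> affine hull (A ` {..<n})" for x y
  proof -
    have "N \<bullet> x = b" "N \<bullet> y = b" using that hull_N by blast+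
    then show ?thesis by (simp add: inner_diff_left inner_diff_right inner_commute)
  qed
  then have "\<exists>N. N \<noteq> 0 \<and>
      (\<forall>x \<in> affine hull (A ` {..<n}). \<forall>y \<in> affine hull (A ` {..<n}). (x - y) \<bullet> N = 0)"
    using \<open>N \<noteq> 0\<close> by blast
  from someI_ex[OF this] show "normal \<noteq> 0"
    "\<And>x y. x \<in> affine hull (A ` {..<n}) \<Longrightarrow> y \<in> affine hull (A ` {..<n}) \<Longrightarrow> (x - y) \<bullet> normal = 0"
    unfolding normal_def by blast+
qed

lemma edge_orth_normal: "i < n \<Longrightarrow> edge i \<bullet> normal = 0"
  unfolding edge_def by (intro normal(2) hull_inc) (auto simp: index)

lemma edge_nonzero:
  assumes "i < n"
  shows "edge i \<noteq> 0"
proof -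
  have "nxt n i \<noteq> i"
    using assms n_ge_3 unfolding nxt_def by (auto simp: mod_if split: if_splits)
  then have "A (nxt n i) \<noteq> A i"
    using inj_onD[OF A_inj] index(1)[OF assms] assms by blast
  then show ?thesis unfolding edge_def by simp
qed

lemma corner_normal_nonzero: "i < n \<Longrightarrow> corner_normal i \<noteq> 0"
  using corner_nondegenerate unfolding corner_normal_def by (simp add: cross_eq_0)

lemma corner_plane_orth:
  assumes "x \<in> affine hull {A i, V i, W i}" "y \<in> affine hull {A i, V i, W i}"
  shows "(x - y) \<bullet> corner_normal i = 0"
proof -
  let ?m = "corner_normal i"
  have "?m \<bullet> (V i - A i) = 0" "?m \<bullet> (W i - A i) = 0"
    unfolding corner_normal_def by (simp_all add: dot_cross_self inner_commute)
  then have "{A i, V i, W i} \<subseteq> {z. ?m \<bullet> z = ?m \<bullet> A i}"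
    by (auto simp: inner_diff_right)
  then have "affine hull {A i, V i, W i} \<subseteq> {z. ?m \<bullet> z = ?m \<bullet> A i}"
    by (intro hull_minimal affine_hyperplane)
  then have "?m \<bullet> x = ?m \<bullet> A i" "?m \<bullet> y = ?m \<bullet> A i" using assms by blast+
  then show ?thesis by (simp add: inner_diff_left inner_diff_right inner_commute)
qed

(* The central plane and the corner plane at A_i are transversal: otherwise the edge a_i
   would lie in the corner plane. *)
lemma planes_transversal:
  assumes "i < n"
  shows "cross3 normal (corner_normal i) \<noteq> 0"
proof
  assume "cross3 normal (corner_normal i) = 0"
  then have "corner_normal i = ((normal \<bullet> corner_normal i) / (normal \<bullet> normal)) *\<^sub>R normal"
    using cross3_zero_parallel normal(1) by blast
  then have "edge i \<bullet> corner_normal i = 0"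
    using edge_orth_normal[OF assms] by (metis inner_scaleR_right mult_zero_right)
  then have "edge i \<in> span {V i - A i, W i - A i}"
    using orth_cross3_in_span corner_normal_nonzero[OF assms] unfolding corner_normal_def by blast
  then show False using edge_transversal[OF assms] unfolding edge_def by blast
qed

lemma lline_orth:
  assumes "x \<in> lline n A V W i" "y \<in> lline n A V W i"
  shows "(x - y) \<bullet> normal = 0 \<and> (x - y) \<bullet> corner_normal i = 0"
  using assms normal(2) corner_plane_orth unfolding lline_def by blast

lemma B_on_lline: "i < n \<Longrightarrow> B i \<in> lline n A V W i" "i < n \<Longrightarrow> B (prv n i) \<in> lline n A V W i"
  using B_meet[of i] B_meet[of "prv n i"] index by auto

lemma dir_nonzero: "i < n \<Longrightarrow> dir i \<noteq> 0"
  using B_distinct[of i] unfolding dir_def by auto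

lemma dir_orth: "i < n \<Longrightarrow> dir i \<bullet> normal = 0" "i < n \<Longrightarrow> dir i \<bullet> corner_normal i = 0"
  using lline_orth[OF B_on_lline] unfolding dir_def by blast+

lemma lline_eq:
  assumes "i < n"
  shows "lline n A V W i = {B i + s *\<^sub>R dir i | s. True}"
  unfolding dir_def
proof (rule affine_in_two_planes[OF _ planes_transversal[OF assms]])
  show "affine (lline n A V W i)" unfolding lline_def by (intro affine_Int affine_affine_hull)
qed (use assms lline_orth B_on_lline B_distinct in auto)

lemma turn_nonzero:
  assumes "i < n"
  shows "turn i \<noteq> 0"
proof
  let ?j = "nxt n i"
  assume "turn i = 0"
  have "?j < n" using index assms by simp
  have "cross3 (dir i) (dir ?j) = 0"
    using cross3_zero_of_orth_normal[OF normal(1) dir_orth(1)[OF assms] dir_orth(1)[OF \<open>?j < n\<close>]]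
      \<open>turn i = 0\<close> unfolding turn_def by blast
  then have "lines_parallel (lline n A V W i) (lline n A V W ?j)"
    unfolding lline_eq[OF assms] lline_eq[OF \<open>?j < n\<close>]
    by (intro lines_parallel_of_cross3_zero dir_nonzero assms \<open>?j < n\<close>)
  then show False using lines_nonparallel[OF assms] by blast
qed

lemma t_ne:
  assumes "i < n"
  shows "t i \<noteq> 0 \<and> t i \<noteq> 1"
  using A_between[OF assms] A_not_B[OF assms] by auto

lemma edge_decomp:
  assumes "i < n"
  shows "edge i = t i *\<^sub>R dir i + (1 - t (nxt n i)) *\<^sub>R dir (nxt n i)"
proof -
  have next_vertex: "A (nxt n i) = t (nxt n i) *\<^sub>R B i + (1 - t (nxt n i)) *\<^sub>R B (nxt n i)"
    using A_between[of "nxt n i"] index assms by simp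
  have this_vertex: "A i = t i *\<^sub>R B (prv n i) + (1 - t i) *\<^sub>R B i"
    using A_between assms by blast
  show ?thesis
    unfolding edge_def dir_def index(3)[OF assms] next_vertex this_vertex
    by (simp add: algebra_simps)
qed

lemma vertex_relation:
  assumes "i < n"
    and corner: "(r' *\<^sub>R edge (prv n i) - r *\<^sub>R edge i) \<bullet> corner_normal i = 0"
  shows "t (prv n i) * r' * turn (prv n i) + (1 - t (nxt n i)) * r * turn i = 0"
proof -
  let ?p = "prv n i" and ?j = "nxt n i"
  define c where "c = r' *\<^sub>R edge ?p - r *\<^sub>R edge i"
  have "c \<bullet> normal = 0"
    using edge_orth_normal index assms(1) by (simp add: c_def inner_diff_left)
  then have parallel: "cross3 (dir i) c = 0"
    using cross3_zero_of_common_normals[OF planes_transversal[OF assms(1)]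
        dir_orth(1)[OF assms(1)] dir_orth(2)[OF assms(1)]] corner
    unfolding c_def by blast
  have prev_edge: "edge ?p = t ?p *\<^sub>R dir ?p + (1 - t i) *\<^sub>R dir i"
    using edge_decomp[of ?p] index assms(1) by simp
  have "c = (r' * t ?p) *\<^sub>R dir ?p + (r' * (1 - t i) - r * t i) *\<^sub>R dir i
      - (r * (1 - t ?j)) *\<^sub>R dir ?j"
    unfolding c_def prev_edge edge_decomp[OF assms(1)] by (simp add: algebra_simps)
  then have "cross3 (dir i) c = (r' * t ?p) *\<^sub>R cross3 (dir i) (dir ?p)
      - (r * (1 - t ?j)) *\<^sub>R cross3 (dir i) (dir ?j)"
    by (simp add: cross_add_right Cross3.right_diff_distrib cross_mult_right)
  then have "normal \<bullet> cross3 (dir i) c = (r' * t ?p) * (normal \<bullet> cross3 (dir i) (dir ?p))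
      - (r * (1 - t ?j)) * turn i"
    unfolding turn_def by (simp add: inner_diff_right)
  moreover have "normal \<bullet> cross3 (dir i) (dir ?p) = - turn ?p"
    unfolding turn_def index(4)[OF assms(1)] using cross_skew[of "dir i" "dir ?p"] by simp
  ultimately show ?thesis using parallel by (simp add: algebra_simps)
qed

lemma side_rotations:
  assumes "\<And>i. i < n \<Longrightarrow>
    inf_rigid [A i, A (nxt n i), V (nxt n i), W i] [0, 0, uV (nxt n i), uW i]"
  obtains r where "\<And>i. i < n \<Longrightarrow>
      uV (nxt n i) = cross3 (r i *\<^sub>R edge i) (V (nxt n i) - A (nxt n i))
      \<and> uW i = cross3 (r i *\<^sub>R edge i) (W i - A i)"
proof -
  have "\<forall>i \<in> {..<n}. \<exists>k. uV (nxt n i) = cross3 (k *\<^sub>R edge i) (V (nxt n i) - A (nxt n i))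
      \<and> uW i = cross3 (k *\<^sub>R edge i) (W i - A i)"
  proof
    fix i assume "i \<in> {..<n}"
    then have "i < n" by simp
    have "A i \<noteq> A (nxt n i)" using edge_nonzero[OF \<open>i < n\<close>] unfolding edge_def by auto
    then show "\<exists>k. uV (nxt n i) = cross3 (k *\<^sub>R edge i) (V (nxt n i) - A (nxt n i))
      \<and> uW i = cross3 (k *\<^sub>R edge i) (W i - A i)"
      using side_face_motion[OF assms[OF \<open>i < n\<close>]] unfolding edge_def by blast
  qed
  then have "\<exists>r. \<forall>i \<in> {..<n}. uV (nxt n i) = cross3 (r i *\<^sub>R edge i) (V (nxt n i) - A (nxt n i))
      \<and> uW i = cross3 (r i *\<^sub>R edge i) (W i - A i)"
    by (rule bchoice)
  then show ?thesis using that by auto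
qed

(* Infinitesimal flexibility yields rotation speeds r_i of the side faces about their edges,
   not all zero, satisfying the vertex relation at every vertex: the corner face at A_i
   must realise the velocity of V_i given by side face i-1 and that of W_i given by side
   face i. *)
lemma flexible_recurrence:
  assumes "inf_flexible n A V W"
  obtains r j where "j < n" "r j \<noteq> 0"
    and "\<And>i. i < n \<Longrightarrow>
      t (prv n i) * r (prv n i) * turn (prv n i) + (1 - t (nxt n i)) * r i * turn i = 0"
proof -
  obtain uA uV uW where uA0: "\<forall>i<n. uA i = 0"
    and nontrivial: "\<exists>i<n. uA i \<noteq> 0 \<or> uV i \<noteq> 0 \<or> uW i \<noteq> 0"
    and corner: "\<forall>i<n. inf_rigid [V i, A i, W i] [uV i, uA i, uW i]"
    and side: "\<forall>i<n. inf_rigid [A i, A (nxt n i), V (nxt n i), W i]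
                             [uA i, uA (nxt n i), uV (nxt n i), uW i]"
    using assms unfolding inf_flexible_def by blast
  obtain r where side_rot: "\<And>i. i < n \<Longrightarrow>
      uV (nxt n i) = cross3 (r i *\<^sub>R edge i) (V (nxt n i) - A (nxt n i))
      \<and> uW i = cross3 (r i *\<^sub>R edge i) (W i - A i)"
    using side_rotations[of uV uW] side uA0 index by auto
  have relation: "t (prv n i) * r (prv n i) * turn (prv n i) + (1 - t (nxt n i)) * r i * turn i = 0"
    if "i < n" for i
  proof -
    have "inf_rigid [V i, A i, W i] [uV i, 0, uW i]" using corner uA0 that by auto
    then obtain \<sigma> where \<sigma>: "uV i = cross3 \<sigma> (V i - A i)" "uW i = cross3 \<sigma> (W i - A i)"
      using corner_face_motion by blast
    have "uV i = cross3 (r (prv n i) *\<^sub>R edge (prv n i)) (V i - A i)"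
      using side_rot[of "prv n i"] index that by simp
    then have "(r (prv n i) *\<^sub>R edge (prv n i) - r i *\<^sub>R edge i) \<bullet> corner_normal i = 0"
      unfolding corner_normal_def
      using corner_compatibility[of _ "V i - A i" \<sigma> _ "W i - A i"] \<sigma> side_rot[OF that] by simp
    then show ?thesis using vertex_relation that by blast
  qed
  have "\<exists>j<n. r j \<noteq> 0"
  proof (rule ccontr)
    assume "\<not> (\<exists>j<n. r j \<noteq> 0)"
    then have "uV i = 0 \<and> uW i = 0" if "i < n" for i
      using side_rot[of "prv n i"] side_rot[OF that] index that by auto
    then show False using nontrivial uA0 by blast
  qed
  then show ?thesis using that relation by blast
qed

end

theorem theorem3:
  fixes n :: nat and A V W B :: "nat \<Rightarrow> real^3" and t :: "nat \<Rightarrow> real"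
  assumes n3: "n \<ge> 3"
    and distinct: "inj_on A {..<n}" "inj_on V {..<n}" "inj_on W {..<n}"
        "A ` {..<n} \<inter> V ` {..<n} = {}" "A ` {..<n} \<inter> W ` {..<n} = {}"
        "V ` {..<n} \<inter> W ` {..<n} = {}"
    and central_plane: "aff_dim (A ` {..<n}) = 2"
    and side_planar: "\<forall>i<n. coplanar {A i, A (nxt n i), V (nxt n i), W i}"
    and flex: "inf_flexible n A V W"
    and vw: "\<forall>i<n. \<not> collinear {0, V i - A i, W i - A i}"
    and a_prev: "\<forall>i<n. A i - A (prv n i) \<notin> span {V i - A i, W i - A i}"
    and a_next: "\<forall>i<n. A (nxt n i) - A i \<notin> span {V i - A i, W i - A i}"
    and nonpar: "\<forall>i<n. \<not> lines_parallel (lline n A V W i) (lline n A V W (nxt n i))"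
    and B: "\<forall>i<n. B i \<in> lline n A V W i \<inter> lline n A V W (nxt n i)"
    and Bdist: "\<forall>i<n. B (prv n i) \<noteq> B i"
    and AB: "\<forall>i<n. A i \<noteq> B (prv n i) \<and> A i \<noteq> B i"
    and t: "\<forall>i<n. A i = t i *\<^sub>R B (prv n i) + (1 - t i) *\<^sub>R B i"
  shows "(\<Prod>i<n. (1 - t i) / t i) = (-1) ^ n"
proof -
  interpret kokotsakis_mesh n A V W B t
    using n3 distinct(1) central_plane vw a_next nonpar B Bdist AB t by unfold_locales blast+
  obtain r j where "j < n" "r j \<noteq> 0"
    and relation: "\<And>i. i < n \<Longrightarrow>
      t (prv n i) * r (prv n i) * turn (prv n i) + (1 - t (nxt n i)) * r i * turn i = 0"
    using flexible_recurrence[OF flex] by blast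
  show ?thesis
  proof (rule cyclic_recurrence_product[where X = "\<lambda>i. r i * turn i"])
    show "0 < n" using n3 by simp
    show "t i \<noteq> 0 \<and> t i \<noteq> 1" if "i < n" for i using t_ne[OF that] .
    show "t (prv n i) * (r (prv n i) * turn (prv n i)) + (1 - t (nxt n i)) * (r i * turn i) = 0"
      if "i < n" for i using relation[OF that] by (simp add: mult.assoc)
    show "j < n" "r j * turn j \<noteq> 0" using \<open>j < n\<close> \<open>r j \<noteq> 0\<close> turn_nonzero by simp_all
  qed
qed

end
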